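(* Let $d, d_0$ be metrics on a set $E$ such that $d$ takes values in $\lambda \mathbb{Z}$ and $d_0$ takes values in $[0,\lambda)$ for some real $\lambda > 0$. Then $d+d_0$ is a metric on $E$ refining $d$. In particular, if $d$ takes integer values, then $d + d'_{\flat}$ is a metric refining $d$ for any metric $d'$ on $E$, where $d'_\flat = d'/(1+d')$.
   Context: Metrics on $E$ are regarded as functions on the Cartesian product $E \times E$. For functions $f,f'\colon E\times E \to \mathbb{R}$, $f'$ refines $f$ if for all pairs $(x_1,x_2),(x_1',x_2') \in E\times E$ that agree in at least one coordinate, $f(x_1,x_2) < f(x_1',x_2')$ implies $f'(x_1,x_2) < f'(x_1',x_2')$. *)

theory Defs
  imports Complex_Main
begin

definition is_metric_on :: "'a set \<Rightarrow> ('a \<Rightarrow> 'a \<Rightarrow> real) \<Rightarrow> bool" where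
  "is_metric_on E d \<longleftrightarrow>
     (\<forall>x\<in>E. \<forall>y\<in>E. 0 \<le> d x y) \<and>
     (\<forall>x\<in>E. \<forall>y\<in>E. d x y = 0 \<longleftrightarrow> x = y) \<and>
     (\<forall>x\<in>E. \<forall>y\<in>E. d x y = d y x) \<and>
     (\<forall>x\<in>E. \<forall>y\<in>E. \<forall>z\<in>E. d x z \<le> d x y + d y z)"

definition refines_on :: "'a set \<Rightarrow> ('a \<Rightarrow> 'a \<Rightarrow> real) \<Rightarrow> ('a \<Rightarrow> 'a \<Rightarrow> real) \<Rightarrow> bool" where
  "refines_on E f' f \<longleftrightarrow>
     (\<forall>x1\<in>E. \<forall>x2\<in>E. \<forall>y1\<in>E. \<forall>y2\<in>E. (x1 = y1 \<or> x2 = y2) \<longrightarrow>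
        f x1 x2 < f y1 y2 \<longrightarrow> f' x1 x2 < f' y1 y2)"

end

theory Submission
  imports Defs
begin

text \<open>Adding \<open>d\<^sub>0\<close> perturbs every value of \<open>d\<close> by less than the spacing \<open>\<lambda>\<close> of
  the lattice \<open>\<lambda>\<int>\<close> containing the values of \<open>d\<close>, so strict inequalities between values
  of \<open>d\<close> survive; that \<open>d + d\<^sub>0\<close> is again a metric is immediate. For integer-valued \<open>d\<close>
  take \<open>\<lambda> = 1\<close>: the map \<open>t \<mapsto> t / (1 + t)\<close> is increasing, subadditive, vanishes only
  at \<open>0\<close> and maps \<open>[0, \<infinity>)\<close> into \<open>[0, 1)\<close>, so \<open>d'\<^sub>\<flat>\<close> is a metric with values below \<open>1\<close>.\<close>

lemma is_metric_onD:
  assumes "is_metric_on E d" "x \<in> E" "y \<in> E"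
  shows "0 \<le> d x y" "d x y = 0 \<longleftrightarrow> x = y" "d x y = d y x"
    and "z \<in> E \<Longrightarrow> d x z \<le> d x y + d y z"
  using assms unfolding is_metric_on_def by blast+

lemma is_metric_on_add:
  assumes "is_metric_on E d" "is_metric_on E d0"
  shows "is_metric_on E (\<lambda>x y. d x y + d0 x y)"
  unfolding is_metric_on_def
proof (intro conjI ballI)
  fix x y assume xy: "x \<in> E" "y \<in> E"
  note D = is_metric_onD[OF assms(1) xy] and D0 = is_metric_onD[OF assms(2) xy]
  show "0 \<le> d x y + d0 x y" "d x y + d0 x y = d y x + d0 y x"
    using D D0 by simp_all
  show "d x y + d0 x y = 0 \<longleftrightarrow> x = y"
    using D(1,2) D0(1,2) by linarith
  show "d x z + d0 x z \<le> d x y + d0 x y + (d y z + d0 y z)" if "z \<in> E" for z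
    using D(4)[OF that] D0(4)[OF that] by linarith
qed

lemma lattice_points_gap:
  fixes lam :: real
  assumes "lam > 0" "a = lam * of_int k" "b = lam * of_int l" "a < b"
  shows "a + lam \<le> b"
proof -
  have "k < l"
    using assms by (simp add: mult_less_cancel_left_pos)
  then have "real_of_int k + 1 \<le> real_of_int l"
    by linarith
  then have "lam * (real_of_int k + 1) \<le> lam * real_of_int l"
    using \<open>lam > 0\<close> by simp
  then show ?thesis
    using assms(2,3) by (simp add: algebra_simps)
qed

lemma refines_on_add_below_lattice_spacing:
  fixes lam :: real
  assumes "lam > 0"
    and lattice: "\<forall>x\<in>E. \<forall>y\<in>E. \<exists>k::int. d x y = lam * of_int k"
    and small: "\<forall>x\<in>E. \<forall>y\<in>E. 0 \<le> d0 x y \<and> d0 x y < lam"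
  shows "refines_on E (\<lambda>x y. d x y + d0 x y) d"
  unfolding refines_on_def
proof (intro ballI impI)
  fix x1 x2 y1 y2 assume in_E: "x1 \<in> E" "x2 \<in> E" "y1 \<in> E" "y2 \<in> E"
    and less: "d x1 x2 < d y1 y2"
  obtain k l :: int where "d x1 x2 = lam * of_int k" "d y1 y2 = lam * of_int l"
    using lattice in_E by meson
  then have "d x1 x2 + lam \<le> d y1 y2"
    using lattice_points_gap \<open>lam > 0\<close> less by blast
  moreover have "d0 x1 x2 < lam" "0 \<le> d0 y1 y2"
    using small in_E by auto
  ultimately show "d x1 x2 + d0 x1 x2 < d y1 y2 + d0 y1 y2"
    by linarith
qed

lemma is_metric_on_comp:
  fixes f :: "real \<Rightarrow> real"
  assumes "is_metric_on E d"
    and nonneg: "\<And>t. 0 \<le> t \<Longrightarrow> 0 \<le> f t"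
    and zero_iff: "\<And>t. 0 \<le> t \<Longrightarrow> f t = 0 \<longleftrightarrow> t = 0"
    and mono: "\<And>s t. 0 \<le> s \<Longrightarrow> s \<le> t \<Longrightarrow> f s \<le> f t"
    and subadd: "\<And>s t. 0 \<le> s \<Longrightarrow> 0 \<le> t \<Longrightarrow> f (s + t) \<le> f s + f t"
  shows "is_metric_on E (\<lambda>x y. f (d x y))"
  unfolding is_metric_on_def
proof (intro conjI ballI)
  fix x y assume "x \<in> E" "y \<in> E"
  note D = is_metric_onD[OF assms(1) this]
  show "0 \<le> f (d x y)" "f (d x y) = 0 \<longleftrightarrow> x = y" "f (d x y) = f (d y x)"
    using D(1-3) nonneg zero_iff by simp_all
  show "f (d x z) \<le> f (d x y) + f (d y z)" if "z \<in> E" for z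
  proof -
    have "0 \<le> d x z" "0 \<le> d y z"
      using is_metric_onD(1)[OF assms(1)] \<open>x \<in> E\<close> \<open>y \<in> E\<close> that by blast+
    then have "f (d x z) \<le> f (d x y + d y z)"
      using mono D(4)[OF that] by blast
    also have "\<dots> \<le> f (d x y) + f (d y z)"
      using subadd D(1) \<open>0 \<le> d y z\<close> by blast
    finally show ?thesis .
  qed
qed

lemma frac_plus_one_mono:
  fixes s t :: real
  assumes "0 \<le> s" "s \<le> t"
  shows "s / (1 + s) \<le> t / (1 + t)"
  using assms by (simp add: divide_simps algebra_simps)

lemma frac_plus_one_subadditive:
  fixes s t :: real
  assumes "0 \<le> s" "0 \<le> t"
  shows "(s + t) / (1 + (s + t)) \<le> s / (1 + s) + t / (1 + t)"
proof -
  have "(s + t) / (1 + (s + t)) = s / (1 + (s + t)) + t / (1 + (s + t))"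
    by (simp add: add_divide_distrib)
  also have "s / (1 + (s + t)) \<le> s / (1 + s)"
    using assms by (intro divide_left_mono) auto
  also have "t / (1 + (s + t)) \<le> t / (1 + t)"
    using assms by (intro divide_left_mono) auto
  finally show ?thesis by simp
qed

lemma is_metric_on_frac_plus_one:
  assumes "is_metric_on E d"
  shows "is_metric_on E (\<lambda>x y. d x y / (1 + d x y))"
proof (rule is_metric_on_comp[OF assms])
  show "t / (1 + t) = 0 \<longleftrightarrow> t = 0" if "0 \<le> t" for t :: real
    using that by (simp add: divide_simps)
qed (simp_all add: frac_plus_one_mono frac_plus_one_subadditive)

lemma frac_plus_one_less_one:
  fixes t :: real
  assumes "0 \<le> t"
  shows "0 \<le> t / (1 + t) \<and> t / (1 + t) < 1"
  using assms by (simp add: divide_simps)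

theorem proposition4:
  fixes E :: "'a set" and d d0 d' :: "'a \<Rightarrow> 'a \<Rightarrow> real" and lam :: real
  shows
   "(is_metric_on E d \<and> is_metric_on E d0 \<and> lam > 0 \<and>
     (\<forall>x\<in>E. \<forall>y\<in>E. \<exists>k::int. d x y = lam * of_int k) \<and>
     (\<forall>x\<in>E. \<forall>y\<in>E. 0 \<le> d0 x y \<and> d0 x y < lam)
     \<longrightarrow> is_metric_on E (\<lambda>x y. d x y + d0 x y) \<and>
         refines_on E (\<lambda>x y. d x y + d0 x y) d)
    \<and>
    (is_metric_on E d \<and> (\<forall>x\<in>E. \<forall>y\<in>E. d x y \<in> \<int>) \<and> is_metric_on E d'
     \<longrightarrow> is_metric_on E (\<lambda>x y. d x y + d' x y / (1 + d' x y)) \<and>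
         refines_on E (\<lambda>x y. d x y + d' x y / (1 + d' x y)) d)"
proof (intro conjI impI; (elim conjE)?)
  assume "is_metric_on E d" "is_metric_on E d0" "lam > 0"
    "\<forall>x\<in>E. \<forall>y\<in>E. \<exists>k::int. d x y = lam * of_int k"
    "\<forall>x\<in>E. \<forall>y\<in>E. 0 \<le> d0 x y \<and> d0 x y < lam"
  then show "is_metric_on E (\<lambda>x y. d x y + d0 x y)" "refines_on E (\<lambda>x y. d x y + d0 x y) d"
    by (simp_all add: is_metric_on_add refines_on_add_below_lattice_spacing)
next
  assume d: "is_metric_on E d" and int: "\<forall>x\<in>E. \<forall>y\<in>E. d x y \<in> \<int>" and d': "is_metric_on E d'"
  show "is_metric_on E (\<lambda>x y. d x y + d' x y / (1 + d' x y))"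
    using d d' by (intro is_metric_on_add is_metric_on_frac_plus_one)
  have "\<exists>k::int. d x y = 1 * of_int k" if "x \<in> E" "y \<in> E" for x y
  proof -
    from int that have "d x y \<in> \<int>" by blast
    then obtain k where "d x y = of_int k" by (rule Ints_cases)
    then show ?thesis by simp
  qed
  moreover have "0 \<le> d' x y / (1 + d' x y) \<and> d' x y / (1 + d' x y) < 1"
    if "x \<in> E" "y \<in> E" for x y
    using frac_plus_one_less_one is_metric_onD(1)[OF d' that] .
  ultimately show "refines_on E (\<lambda>x y. d x y + d' x y / (1 + d' x y)) d"
    using refines_on_add_below_lattice_spacing[of 1 E d] by simp
qed

end
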